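(* Let $(P,\preceq)$ be a poset, $\mathcal{X}:=\{X\subseteq P\mid (X,\preceq)\text{ well-ordered}\}$, $\Lambda$ a set, $\mathcal{I},\mathcal{O}\subseteq\Lambda$ finite disjoint sets, $s$ a causal $(\mathcal{I},\mathcal{O})$-system over $\mathcal{X}$, $i\in\mathcal{I}$, $o\in\mathcal{O}$. For $\mathbf{X}\in\mathcal{X}^{\mathcal{I}\setminus\{i\}}$ let $\phi(\mathbf{X})$ denote the unique $X_i\in\mathcal{X}$ with $s(\mathbf{X}\cup\{(i,X_i)\})(o)=X_i$. Then for all $\mathbf{X},\mathbf{X}'\in\mathcal{X}^{\mathcal{I}\setminus\{i\}}$ and all $y\in\phi(\mathbf{X})\mathbin{\triangle}\phi(\mathbf{X}')$ there exist $i'\in\mathcal{I}\setminus\{i\}$ and $x\in\mathbf{X}(i')\mathbin{\triangle}\mathbf{X}'(i')$ with $x\prec y$.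
   Context: $\mathcal{X}^{\mathcal{I}}$ is the set of functions $\mathcal{I}\to\mathcal{X}$. $\mathbin{\triangle}$ denotes symmetric difference; $x\prec y$ means $x\preceq y$ and $x\ne y$. A causal $(\mathcal{I},\mathcal{O})$-system over $\mathcal{X}$ is a function $s:\mathcal{X}^{\mathcal{I}}\to\mathcal{X}^{\mathcal{O}}$ such that for all $\mathbf{X},\mathbf{X}'\in\mathcal{X}^{\mathcal{I}}$, $o\in\mathcal{O}$, $y\in s(\mathbf{X})(o)\mathbin{\triangle}s(\mathbf{X}')(o)$ there exist $i\in\mathcal{I}$ and $x\in\mathbf{X}(i)\mathbin{\triangle}\mathbf{X}'(i)$ with $x\prec y$. (For such systems the fixed point $\phi(\mathbf{X})$ exists and is unique.) *)

theory Defs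
  imports "HOL-Library.FuncSet"
begin

text \<open>The poset (P, \<preceq>) is the type 'p with its order; x \<prec> y is x < y.\<close>

definition well_ordered_subset :: "'p::order set \<Rightarrow> bool" where
  "well_ordered_subset X \<longleftrightarrow>
     (\<forall>x\<in>X. \<forall>y\<in>X. x \<le> y \<or> y \<le> x) \<and>
     (\<forall>S. S \<subseteq> X \<longrightarrow> S \<noteq> {} \<longrightarrow> (\<exists>m\<in>S. \<forall>z\<in>S. m \<le> z))"

definition symdiff :: "'a set \<Rightarrow> 'a set \<Rightarrow> 'a set" (infixl "\<triangle>" 65) where
  "A \<triangle> B = (A - B) \<union> (B - A)"

definition WO :: "'p::order set set" where
  "WO = {X. well_ordered_subset X}"

text \<open>Assignments in \<X>^I are extensional functions I \<rightarrow> \<X>.\<close>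
definition causal_system ::
  "'l set \<Rightarrow> 'l set \<Rightarrow> (('l \<Rightarrow> 'p::order set) \<Rightarrow> ('l \<Rightarrow> 'p set)) \<Rightarrow> bool" where
  "causal_system Inp Outp s \<longleftrightarrow>
     (\<forall>X \<in> Inp \<rightarrow>\<^sub>E WO. s X \<in> Outp \<rightarrow>\<^sub>E WO) \<and>
     (\<forall>X \<in> Inp \<rightarrow>\<^sub>E WO. \<forall>X' \<in> Inp \<rightarrow>\<^sub>E WO. \<forall>ob\<in>Outp. \<forall>y \<in> s X ob \<triangle> s X' ob.
        \<exists>i\<in>Inp. \<exists>x \<in> X i \<triangle> X' i. x < y)"

definition fixpt ::
  "(('l \<Rightarrow> 'p::order set) \<Rightarrow> ('l \<Rightarrow> 'p set)) \<Rightarrow> 'l \<Rightarrow> 'l \<Rightarrow> ('l \<Rightarrow> 'p set) \<Rightarrow> 'p set" where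
  "fixpt s i ob X = (THE Xi. Xi \<in> WO \<and> s (X(i := Xi)) ob = Xi)"

end

theory Submission
  imports Defs
begin

(* With the inputs other than i fixed, Z \<mapsto> s(X \<union> {(i, Z)})(o) is a causal self-map F of the
  well-ordered subsets of P. Its fixed point is built as in Zermelo's well-ordering proof: call a
  well-ordered A an approximant if it is an initial segment of F A. Two approximants are
  comparable (compare them at the least point where they differ), so the union U of all of them
  is again an approximant; the least point of F U - U could be added to U, hence F U = U.
  Uniqueness and causality of the fixed point come from one descent argument: Z \<triangle> Z' is
  well-founded, being contained in the union of two well-ordered sets, and causality of s puts
  below every point of Z \<triangle> Z' either another point of Z \<triangle> Z' or a difference of the other
  inputs; the latter alternative is upward closed, so it holds on all of Z \<triangle> Z'.
  Finiteness and disjointness of the index sets play no role. *)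

(* Transitivity is essential: otherwise a descending chain could alternate between A and B. *)
lemma wfp_on_Un:
  assumes "transp R" "wfp_on A R" "wfp_on B R"
  shows "wfp_on (A \<union> B) R"
  unfolding wfp_on_iff_ex_minimal
proof (intro allI impI)
  fix S assume S: "S \<subseteq> A \<union> B" "S \<noteq> {}"
  show "\<exists>z\<in>S. \<forall>y. R y z \<longrightarrow> y \<notin> S"
  proof (cases "S \<inter> A = {}")
    case True
    then have "S \<subseteq> B" using S by blast
    then show ?thesis using assms(3) S(2) unfolding wfp_on_iff_ex_minimal by blast
  next
    case False
    then obtain m where m: "m \<in> S \<inter> A" "\<And>y. R y m \<Longrightarrow> y \<notin> S \<inter> A"
      using assms(2) unfolding wfp_on_iff_ex_minimal by (metis inf_le2)
    show ?thesis
    proof (cases "\<exists>y\<in>S. R y m")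
      case True
      define T where "T = {t\<in>S. R t m}"
      have "T \<subseteq> B" "T \<noteq> {}" using S m True by (auto simp: T_def)
      then obtain m' where m': "m' \<in> T" "\<And>y. R y m' \<Longrightarrow> y \<notin> T"
        using assms(3) unfolding wfp_on_iff_ex_minimal by blast
      have "y \<notin> S" if "R y m'" for y
      proof
        assume "y \<in> S"
        moreover have "R y m" using transpD[OF assms(1) that] m'(1) by (simp add: T_def)
        ultimately show False using m'(2)[OF that] by (simp add: T_def)
      qed
      then show ?thesis using m'(1) by (auto simp: T_def)
    qed (use m in blast)
  qed
qed

lemma wfp_on_induct_upward_closed:
  assumes "wfp_on S R" "y \<in> S"
    and descent: "\<And>y. y \<in> S \<Longrightarrow> P y \<or> (\<exists>x\<in>S. R x y)"
    and upward_closed: "\<And>x y. P x \<Longrightarrow> R x y \<Longrightarrow> P y"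
  shows "P y"
  using assms(1,2)
proof (induction rule: wfp_on_induct)
  case (less y)
  then show ?case using descent upward_closed by blast
qed (rule assms(2))

lemma WO_iff_total_wfp_on:
  "A \<in> WO \<longleftrightarrow> (\<forall>x\<in>A. \<forall>y\<in>A. x \<le> y \<or> y \<le> x) \<and> wfp_on A (<)"
proof
  assume "A \<in> WO"
  then have total: "\<forall>x\<in>A. \<forall>y\<in>A. x \<le> y \<or> y \<le> x"
    and least: "\<And>S. S \<subseteq> A \<Longrightarrow> S \<noteq> {} \<Longrightarrow> \<exists>m\<in>S. \<forall>z\<in>S. m \<le> z"
    unfolding WO_def well_ordered_subset_def by blast+
  have "wfp_on A (<)"
    unfolding wfp_on_iff_ex_minimal
  proof (intro allI impI)
    fix S assume "S \<subseteq> A" "S \<noteq> {}"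
    then obtain m where "m \<in> S" "\<forall>z\<in>S. m \<le> z" using least by blast
    then show "\<exists>m\<in>S. \<forall>z. z < m \<longrightarrow> z \<notin> S" by (blast dest: leD)
  qed
  with total show "(\<forall>x\<in>A. \<forall>y\<in>A. x \<le> y \<or> y \<le> x) \<and> wfp_on A (<)" by blast
next
  assume "(\<forall>x\<in>A. \<forall>y\<in>A. x \<le> y \<or> y \<le> x) \<and> wfp_on A (<)"
  then have total: "\<forall>x\<in>A. \<forall>y\<in>A. x \<le> y \<or> y \<le> x"
    and minimal: "\<And>S. S \<subseteq> A \<Longrightarrow> S \<noteq> {} \<Longrightarrow> \<exists>m\<in>S. \<forall>z. z < m \<longrightarrow> z \<notin> S"
    unfolding wfp_on_iff_ex_minimal by blast+
  have "\<exists>m\<in>S. \<forall>z\<in>S. m \<le> z" if S: "S \<subseteq> A" "S \<noteq> {}" for S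
  proof -
    obtain m where m: "m \<in> S" "\<forall>z. z < m \<longrightarrow> z \<notin> S" using minimal[OF S] by blast
    have "m \<le> z" if "z \<in> S" for z
      using total m S(1) that by (auto simp: le_less)
    then show ?thesis using m(1) by blast
  qed
  with total show "A \<in> WO" unfolding WO_def well_ordered_subset_def by blast
qed

lemma WO_subset: "A \<in> WO \<Longrightarrow> B \<subseteq> A \<Longrightarrow> B \<in> WO"
  unfolding WO_iff_total_wfp_on by (blast intro: wfp_on_subset)

lemma WO_total: "A \<in> WO \<Longrightarrow> x \<in> A \<Longrightarrow> y \<in> A \<Longrightarrow> x \<le> y \<or> y \<le> x"
  unfolding WO_iff_total_wfp_on by blast

lemma WO_Un_wfp_on: "A \<in> WO \<Longrightarrow> B \<in> WO \<Longrightarrow> wfp_on (A \<union> B) (<)"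
  unfolding WO_iff_total_wfp_on by (simp add: wfp_on_Un)

lemma symdiff_commute: "A \<triangle> B = B \<triangle> A"
  unfolding symdiff_def by blast

lemma WO_symdiff_wfp_on: "A \<in> WO \<Longrightarrow> B \<in> WO \<Longrightarrow> wfp_on (A \<triangle> B) (<)"
  by (erule wfp_on_subset[OF WO_Un_wfp_on]) (auto simp: symdiff_def)

definition initial_segment :: "'a::order set \<Rightarrow> 'a set \<Rightarrow> bool" where
  "initial_segment A B \<longleftrightarrow> A \<subseteq> B \<and> (\<forall>b\<in>B. \<forall>a\<in>A. b < a \<longrightarrow> b \<in> A)"

lemma initial_segment_refl: "initial_segment A A"
  unfolding initial_segment_def by blast

lemma initial_segment_agree_below:
  assumes "initial_segment A B" "a \<in> A" "y \<le> a"
  shows "{x\<in>A. x < y} = {x\<in>B. x < y}"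
  using assms unfolding initial_segment_def by (auto dest: less_le_trans)

lemma initial_segment_Union:
  assumes "\<And>A B. A \<in> \<A> \<Longrightarrow> B \<in> \<A> \<Longrightarrow> initial_segment A B \<or> initial_segment B A" "A \<in> \<A>"
  shows "initial_segment A (\<Union>\<A>)"
  using assms unfolding initial_segment_def by blast

lemma WO_Union_initial_segment_chain:
  assumes chain: "\<And>A B. A \<in> \<A> \<Longrightarrow> B \<in> \<A> \<Longrightarrow> initial_segment A B \<or> initial_segment B A"
    and "\<A> \<subseteq> WO"
  shows "\<Union>\<A> \<in> WO"
  unfolding WO_iff_total_wfp_on
proof
  show "\<forall>x\<in>\<Union>\<A>. \<forall>y\<in>\<Union>\<A>. x \<le> y \<or> y \<le> x"
  proof (intro ballI)
    fix x y assume "x \<in> \<Union>\<A>" "y \<in> \<Union>\<A>"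
    then obtain A B where "A \<in> \<A>" "B \<in> \<A>" "x \<in> A" "y \<in> B" by blast
    moreover from this have "{x, y} \<subseteq> A \<or> {x, y} \<subseteq> B"
      using chain unfolding initial_segment_def by blast
    ultimately show "x \<le> y \<or> y \<le> x" using WO_total assms(2) by blast
  qed
  show "wfp_on (\<Union>\<A>) (<)"
    unfolding wfp_on_iff_ex_minimal
  proof (intro allI impI)
    fix S assume S: "S \<subseteq> \<Union>\<A>" "S \<noteq> {}"
    then obtain A where A: "A \<in> \<A>" "S \<inter> A \<noteq> {}" by blast
    moreover have "wfp_on A (<)" using assms(2) A(1) WO_iff_total_wfp_on by blast
    ultimately obtain m where m: "m \<in> S \<inter> A" "\<And>y. y < m \<Longrightarrow> y \<notin> S \<inter> A"
      unfolding wfp_on_iff_ex_minimal by (meson inf_le2)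
    have "initial_segment A (\<Union>\<A>)" using initial_segment_Union[OF chain A(1)] by blast
    then show "\<exists>z\<in>S. \<forall>y. y < z \<longrightarrow> y \<notin> S"
      using m S unfolding initial_segment_def by blast
  qed
qed

locale causal_map =
  fixes F :: "'p::order set \<Rightarrow> 'p set"
  assumes F_WO: "\<And>Z. Z \<in> WO \<Longrightarrow> F Z \<in> WO"
    and causal: "\<And>Z Z' y. Z \<in> WO \<Longrightarrow> Z' \<in> WO \<Longrightarrow> y \<in> F Z \<triangle> F Z' \<Longrightarrow> \<exists>x\<in>Z \<triangle> Z'. x < y"
begin

lemma mem_iff_agree_below:
  assumes "A \<in> WO" "B \<in> WO" "{x\<in>A. x < y} = {x\<in>B. x < y}"
  shows "y \<in> F A \<longleftrightarrow> y \<in> F B"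
proof (rule ccontr)
  assume "\<not> ?thesis"
  then have "y \<in> F A \<triangle> F B" by (auto simp: symdiff_def)
  then obtain x where "x \<in> A \<triangle> B" "x < y" using causal assms(1,2) by blast
  then show False using assms(3) by (auto simp: symdiff_def)
qed

definition approximant :: "'p set \<Rightarrow> bool" where
  "approximant A \<longleftrightarrow> A \<in> WO \<and> initial_segment A (F A)"

lemma approximantD:
  assumes "approximant A"
  shows "A \<in> WO" "A \<subseteq> F A" "\<And>y a. y \<in> F A \<Longrightarrow> a \<in> A \<Longrightarrow> y < a \<Longrightarrow> y \<in> A"
  using assms unfolding approximant_def initial_segment_def by blast+

lemma approximant_initial_segment_if_minimal_diff:
  assumes A: "approximant A" and B: "approximant B"
    and y: "y \<in> A - B" and minimal: "\<And>x. x < y \<Longrightarrow> x \<notin> A \<triangle> B"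
  shows "initial_segment B A"
proof -
  have agree: "{x\<in>A. x < y} = {x\<in>B. x < y}"
    using minimal unfolding symdiff_def by blast
  have "y \<in> F A" using approximantD(2)[OF A] y by blast
  then have yFB: "y \<in> F B"
    using mem_iff_agree_below[OF approximantD(1)[OF A] approximantD(1)[OF B] agree] by blast
  have "b < y" if b: "b \<in> B" for b
  proof -
    have "b \<in> F B" using approximantD(2)[OF B] b by blast
    then have "b \<le> y \<or> y \<le> b" using WO_total[OF F_WO[OF approximantD(1)[OF B]]] yFB by blast
    moreover have "\<not> y < b" using approximantD(3)[OF B yFB b] y by blast
    moreover have "b \<noteq> y" using b y by blast
    ultimately show "b < y" by (auto simp: le_less)
  qed
  then have "B = {x\<in>A. x < y}" using agree by blast
  then show ?thesis unfolding initial_segment_def by (blast intro: less_trans)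
qed

lemma approximants_initial_segment_chain:
  assumes A: "approximant A" and B: "approximant B"
  shows "initial_segment A B \<or> initial_segment B A"
proof (cases "A = B")
  case False
  then have "A \<triangle> B \<noteq> {}" unfolding symdiff_def by blast
  moreover have "wfp_on (A \<triangle> B) (<)"
    using WO_symdiff_wfp_on[OF approximantD(1)[OF A] approximantD(1)[OF B]] .
  ultimately obtain y where y: "y \<in> A \<triangle> B" and minimal: "\<And>x. x < y \<Longrightarrow> x \<notin> A \<triangle> B"
    unfolding wfp_on_iff_ex_minimal by blast
  from y consider "y \<in> A - B" | "y \<in> B - A" unfolding symdiff_def by blast
  then show ?thesis
  proof cases
    case 1
    then show ?thesis using approximant_initial_segment_if_minimal_diff[OF A B _ minimal] by blast
  next
    case 2
    then show ?thesis
      using approximant_initial_segment_if_minimal_diff[OF B A _ minimal[unfolded symdiff_commute[of A B]]] by blast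
  qed
qed (simp add: initial_segment_refl)

lemma approximant_Union: "approximant (\<Union>{A. approximant A})"
proof -
  define U where "U = \<Union>{A. approximant A}"
  have chain: "\<And>A B. A \<in> {A. approximant A} \<Longrightarrow> B \<in> {A. approximant A} \<Longrightarrow>
      initial_segment A B \<or> initial_segment B A"
    by (simp add: approximants_initial_segment_chain)
  have U_WO: "U \<in> WO"
    unfolding U_def by (rule WO_Union_initial_segment_chain[OF chain]) (auto dest: approximantD(1))
  have segment: "initial_segment A U" if A: "approximant A" for A
    using initial_segment_Union[of "{A. approximant A}" A, OF chain] A unfolding U_def by blast
  have agree: "{x\<in>A. x < y} = {x\<in>U. x < y}" if "approximant A" "a \<in> A" "y \<le> a" for A a y
    using initial_segment_agree_below[OF segment that(2,3)] that(1) .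
  have "u \<in> F U" if "u \<in> U" for u
  proof -
    obtain A where A: "approximant A" "u \<in> A" using \<open>u \<in> U\<close> unfolding U_def by blast
    have "u \<in> F A" using approximantD(2)[OF A(1)] A(2) by blast
    then show ?thesis
      using mem_iff_agree_below[OF approximantD(1)[OF A(1)] U_WO agree[OF A order_refl]] by blast
  qed
  moreover have "y \<in> U" if y: "y \<in> F U" "a \<in> U" "y < a" for y a
  proof -
    obtain A where A: "approximant A" "a \<in> A" using y(2) unfolding U_def by blast
    have "y \<in> F A"
      using mem_iff_agree_below[OF approximantD(1)[OF A(1)] U_WO agree[OF A less_imp_le[OF y(3)]]] y(1)
      by blast
    then have "y \<in> A" using approximantD(3)[OF A(1) _ A(2) y(3)] by blast
    then show "y \<in> U" using A(1) unfolding U_def by blast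
  qed
  ultimately show ?thesis using U_WO unfolding U_def approximant_def initial_segment_def by blast
qed

lemma approximant_insert_minimal:
  assumes A: "approximant A"
    and y: "y \<in> F A - A" and minimal: "\<And>z. z < y \<Longrightarrow> z \<notin> F A - A"
  shows "approximant (insert y A)"
proof -
  have A_WO: "A \<in> WO" using approximantD(1)[OF A] .
  have below: "a < y" if a: "a \<in> A" for a
  proof -
    have "a \<le> y \<or> y \<le> a" using WO_total[OF F_WO[OF A_WO]] approximantD(2)[OF A] a y by blast
    moreover have "\<not> y < a" using approximantD(3)[OF A _ a] y by blast
    moreover have "a \<noteq> y" using a y by blast
    ultimately show "a < y" by (auto simp: le_less)
  qed
  have yA_WO: "insert y A \<in> WO"
    using WO_subset[OF F_WO[OF A_WO]] approximantD(2)[OF A] y by blast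
  have agree: "z \<in> F (insert y A) \<longleftrightarrow> z \<in> F A" if "\<not> y < z" for z
  proof -
    have "{x\<in>insert y A. x < z} = {x\<in>A. x < z}" using that by auto
    then show ?thesis using mem_iff_agree_below[OF yA_WO A_WO] by blast
  qed
  have "a \<in> F (insert y A)" if "a \<in> insert y A" for a
  proof (cases "a = y")
    case True
    then show ?thesis using agree y by blast
  next
    case False
    then have "a \<in> A" using that by blast
    then show ?thesis using agree[OF less_not_sym[OF below]] approximantD(2)[OF A] by blast
  qed
  moreover have "z \<in> insert y A" if z: "z \<in> F (insert y A)" "a \<in> insert y A" "z < a" for z a
  proof -
    have "z < y" using z(2,3) below less_trans by blast
    then have "z \<in> F A" using agree[OF less_not_sym] z(1) by blast
    then show ?thesis using minimal[OF \<open>z < y\<close>] by blast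
  qed
  ultimately show ?thesis using yA_WO unfolding approximant_def initial_segment_def by blast
qed

lemma ex_fixpoint: "\<exists>Z\<in>WO. F Z = Z"
proof -
  define U where "U = \<Union>{A. approximant A}"
  have U: "approximant U" unfolding U_def by (rule approximant_Union)
  have "F U - U = {}"
  proof (rule ccontr)
    assume "F U - U \<noteq> {}"
    moreover have "wfp_on (F U) (<)" using F_WO[OF approximantD(1)[OF U]] WO_iff_total_wfp_on by blast
    ultimately obtain y where "y \<in> F U - U" "\<And>z. z < y \<Longrightarrow> z \<notin> F U - U"
      unfolding wfp_on_iff_ex_minimal by (meson Diff_subset)
    moreover from this have "approximant (insert y U)" by (rule approximant_insert_minimal[OF U])
    ultimately show False unfolding U_def by blast
  qed
  then have "F U = U" using approximantD(2)[OF U] by blast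
  then show ?thesis using approximantD(1)[OF U] by blast
qed

lemma fixpoint_unique:
  assumes "Z \<in> WO" "Z' \<in> WO" "F Z = Z" "F Z' = Z'"
  shows "Z = Z'"
proof (rule ccontr)
  assume "Z \<noteq> Z'"
  then have "Z \<triangle> Z' \<noteq> {}" unfolding symdiff_def by blast
  then obtain y where y: "y \<in> Z \<triangle> Z'" and minimal: "\<And>x. x < y \<Longrightarrow> x \<notin> Z \<triangle> Z'"
    using WO_symdiff_wfp_on[OF assms(1,2)] unfolding wfp_on_iff_ex_minimal by blast
  obtain x where "x \<in> Z \<triangle> Z'" "x < y" using causal[OF assms(1,2)] y assms(3,4) by metis
  then show False using minimal by blast
qed

lemma ex1_fixpoint: "\<exists>!Z. Z \<in> WO \<and> F Z = Z"
  using ex_fixpoint fixpoint_unique by blast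

end

lemma PiE_fun_upd_Diff: "i \<in> I \<Longrightarrow> X \<in> (I - {i}) \<rightarrow>\<^sub>E A \<Longrightarrow> Z \<in> A \<Longrightarrow> X(i := Z) \<in> I \<rightarrow>\<^sub>E A"
  using PiE_fun_upd[of Z "\<lambda>_. A" i X "I - {i}"] by (simp add: insert_absorb)

lemma causal_system_WO:
  assumes "causal_system Inp Outp s" "X \<in> Inp \<rightarrow>\<^sub>E WO" "ob \<in> Outp"
  shows "s X ob \<in> WO"
  using assms(1)[unfolded causal_system_def, THEN conjunct1, rule_format, OF assms(2)] assms(3)
  by (rule PiE_mem)

lemma causal_systemD:
  assumes "causal_system Inp Outp s" "X \<in> Inp \<rightarrow>\<^sub>E WO" "X' \<in> Inp \<rightarrow>\<^sub>E WO" "ob \<in> Outp"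
    and "y \<in> s X ob \<triangle> s X' ob"
  shows "\<exists>j\<in>Inp. \<exists>x\<in>X j \<triangle> X' j. x < y"
  using assms(1)[unfolded causal_system_def, THEN conjunct2, rule_format, OF assms(2-5)] .

lemma causal_system_fun_upd:
  assumes s: "causal_system Inp Outp s" and i: "i \<in> Inp" and ob: "ob \<in> Outp"
    and X: "X \<in> (Inp - {i}) \<rightarrow>\<^sub>E WO" "X' \<in> (Inp - {i}) \<rightarrow>\<^sub>E WO"
    and Z: "Z \<in> WO" "Z' \<in> WO"
    and y: "y \<in> s (X(i := Z)) ob \<triangle> s (X'(i := Z')) ob"
  shows "(\<exists>i'\<in>Inp - {i}. \<exists>x\<in>X i' \<triangle> X' i'. x < y) \<or> (\<exists>x\<in>Z \<triangle> Z'. x < y)"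
proof -
  have "X(i := Z) \<in> Inp \<rightarrow>\<^sub>E WO" "X'(i := Z') \<in> Inp \<rightarrow>\<^sub>E WO"
    using PiE_fun_upd_Diff[OF i X(1) Z(1)] PiE_fun_upd_Diff[OF i X(2) Z(2)] .
  from causal_systemD[where X = "X(i := Z)" and X' = "X'(i := Z')", OF s this ob y]
  obtain j where j: "j \<in> Inp" "\<exists>x\<in>(X(i := Z)) j \<triangle> (X'(i := Z')) j. x < y" ..
  show ?thesis
  proof (cases "j = i")
    case True
    then show ?thesis using j(2) by simp
  next
    case False
    then have "j \<in> Inp - {i}" "\<exists>x\<in>X j \<triangle> X' j. x < y" using j by simp_all
    then show ?thesis by blast
  qed
qed

lemma causal_map_feedback:
  fixes s :: "('l \<Rightarrow> 'p::order set) \<Rightarrow> ('l \<Rightarrow> 'p set)"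
  assumes s: "causal_system Inp Outp s" and i: "i \<in> Inp" and ob: "ob \<in> Outp"
    and X: "X \<in> (Inp - {i}) \<rightarrow>\<^sub>E WO"
  shows "causal_map (\<lambda>Z. s (X(i := Z)) ob)"
proof
  fix Z :: "'p set" assume Z: "Z \<in> WO"
  show "s (X(i := Z)) ob \<in> WO"
    using causal_system_WO[where X = "X(i := Z)", OF s PiE_fun_upd_Diff[OF i X Z] ob] .
next
  fix Z Z' :: "'p set" and y
  assume Z: "Z \<in> WO" "Z' \<in> WO" and y: "y \<in> s (X(i := Z)) ob \<triangle> s (X(i := Z')) ob"
  have "\<not> (\<exists>i'\<in>Inp - {i}. \<exists>x\<in>X i' \<triangle> X i'. x < y)" by (simp add: symdiff_def)
  then show "\<exists>x\<in>Z \<triangle> Z'. x < y"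
    using causal_system_fun_upd[where X' = X and Z = Z and Z' = Z', OF s i ob X X Z y] by blast
qed

lemma fixpt_fixed:
  assumes "causal_system Inp Outp s" "i \<in> Inp" "ob \<in> Outp" "X \<in> (Inp - {i}) \<rightarrow>\<^sub>E WO"
  shows "fixpt s i ob X \<in> WO" "s (X(i := fixpt s i ob X)) ob = fixpt s i ob X"
  using theI'[OF causal_map.ex1_fixpoint[OF causal_map_feedback[OF assms]]]
  unfolding fixpt_def by auto

theorem lemma6p5:
  fixes Inp Outp :: "'l set"
    and s :: "('l \<Rightarrow> 'p::order set) \<Rightarrow> ('l \<Rightarrow> 'p set)"
    and i ob :: 'l
  assumes "finite Inp" and "finite Outp" and "Inp \<inter> Outp = {}"
    and "causal_system Inp Outp s"
    and "i \<in> Inp" and "ob \<in> Outp"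
    and "X \<in> (Inp - {i}) \<rightarrow>\<^sub>E WO" and "X' \<in> (Inp - {i}) \<rightarrow>\<^sub>E WO"
    and "y \<in> fixpt s i ob X \<triangle> fixpt s i ob X'"
  shows "\<exists>i' \<in> Inp - {i}. \<exists>x \<in> X i' \<triangle> X' i'. x < y"
proof -
  define Z Z' where "Z = fixpt s i ob X" and "Z' = fixpt s i ob X'"
  note Z = fixpt_fixed[OF assms(4-7), folded Z_def]
  note Z' = fixpt_fixed[OF assms(4-6,8), folded Z'_def]
  define P where "P u \<longleftrightarrow> (\<exists>i'\<in>Inp - {i}. \<exists>x\<in>X i' \<triangle> X' i'. x < u)" for u
  have step: "P u \<or> (\<exists>x\<in>Z \<triangle> Z'. x < u)" if "u \<in> Z \<triangle> Z'" for u
  proof -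
    have "u \<in> s (X(i := Z)) ob \<triangle> s (X'(i := Z')) ob" using that Z(2) Z'(2) by simp
    from causal_system_fun_upd[where Z = Z and Z' = Z', OF assms(4-8) Z(1) Z'(1) this]
    show ?thesis unfolding P_def .
  qed
  have upward_closed: "P v" if "P u" "u < v" for u v
    using that less_trans unfolding P_def by blast
  have "y \<in> Z \<triangle> Z'" using assms(9) by (simp add: Z_def Z'_def)
  with WO_symdiff_wfp_on[OF Z(1) Z'(1)] have "P y"
    using step upward_closed by (rule wfp_on_induct_upward_closed)
  then show ?thesis unfolding P_def .
qed

end
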